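(* Let $0\le\beta<\alpha<\infty$ and $1<p<q<\infty$ with $\frac1p-\frac1q=\frac{\alpha-\beta}{\mathbf N}$. Suppose that to each cube $Q\subseteq\mathbb R^N$ a function $h^Q$ defined on $Q$ is associated, and for $\gamma\ge0$ set $$h_\gamma(x)=\sup_{Q\ni x}\frac{1}{\omega(Q)^{1+\gamma/\mathbf N}}\int_Q|h^Q(y)|\,d\omega(y),\qquad x\in\mathbb R^N,$$ the supremum over all cubes $Q$ containing $x$. Then $\|h_\beta\|_{L^q_\omega}\le C\|h_\alpha\|_{L^p_\omega}$, where $C$ depends only on $p,q,\alpha$ and $\omega$.
   Context: Let $R\subset\mathbb R^N\setminus\{0\}$ be a root system (finite, invariant under the reflections $\sigma_\alpha(x)=x-2\langle x,\alpha\rangle\alpha/\|\alpha\|^2$), normalized so that $\langle\alpha,\alpha\rangle=2$; $G$ the generated reflection group; $\kappa\ge0$ a $G$-invariant multiplicity function; $d\omega(x)=\prod_{\alpha\in R}|\langle\alpha,x\rangle|^{\kappa(\alpha)}dx$; $\mathbf N=N+\sum_{\alpha\in R}\kappa(\alpha)$; $L^p_\omega=L^p(\mathbb R^N,\omega)$. Cubes are Euclidean cubes in $\mathbb R^N$. *)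

theory Defs
  imports "HOL-Analysis.Analysis"
begin

definition refl_along :: "real^'n \<Rightarrow> real^'n \<Rightarrow> real^'n" where
  "refl_along a x = x - (2 * (x \<bullet> a) / (a \<bullet> a)) *\<^sub>R a"

definition root_system :: "(real^'n) set \<Rightarrow> bool" where
  "root_system R \<longleftrightarrow> finite R \<and> 0 \<notin> R \<and> (\<forall>a\<in>R. a \<bullet> a = 2)
      \<and> (\<forall>a\<in>R. \<forall>b\<in>R. refl_along a b \<in> R)"

inductive_set refl_group :: "(real^'n) set \<Rightarrow> (real^'n \<Rightarrow> real^'n) set" for R where
  id: "id \<in> refl_group R"
| step: "a \<in> R \<Longrightarrow> g \<in> refl_group R \<Longrightarrow> refl_along a \<circ> g \<in> refl_group R"

definition multiplicity :: "(real^'n) set \<Rightarrow> (real^'n \<Rightarrow> real) \<Rightarrow> bool" where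
  "multiplicity R \<kappa> \<longleftrightarrow> (\<forall>a\<in>R. \<kappa> a \<ge> 0) \<and> (\<forall>g\<in>refl_group R. \<forall>a\<in>R. \<kappa> (g a) = \<kappa> a)"

text \<open>|t|^k with the convention |t|^0 = 1 (Isabelle's powr has 0 powr 0 = 0).\<close>
definition abs_pow :: "real \<Rightarrow> real \<Rightarrow> real" where
  "abs_pow t k = (if k = 0 then 1 else \<bar>t\<bar> powr k)"

definition dunkl_weight :: "(real^'n) set \<Rightarrow> (real^'n \<Rightarrow> real) \<Rightarrow> real^'n \<Rightarrow> real" where
  "dunkl_weight R \<kappa> x = (\<Prod>a\<in>R. abs_pow (a \<bullet> x) (\<kappa> a))"

definition dunkl_measure :: "(real^'n) set \<Rightarrow> (real^'n \<Rightarrow> real) \<Rightarrow> (real^'n) measure" where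
  "dunkl_measure R \<kappa> = density lborel (\<lambda>x. ennreal (dunkl_weight R \<kappa> x))"

definition hom_dim :: "(real^'n) set \<Rightarrow> (real^'n \<Rightarrow> real) \<Rightarrow> real" where
  "hom_dim R \<kappa> = real CARD('n) + (\<Sum>a\<in>R. \<kappa> a)"

text \<open>Euclidean (axis-parallel) cubes; taken open, which does not affect the maximal function
  since boundaries are omega-null.\<close>
definition is_cube :: "(real^'n) set \<Rightarrow> bool" where
  "is_cube Q \<longleftrightarrow> (\<exists>c r. r > 0 \<and> Q = {x. \<forall>i. \<bar>x $ i - c $ i\<bar> < r})"

definition enn_powr :: "ennreal \<Rightarrow> real \<Rightarrow> ennreal" where
  "enn_powr x s = (if x = \<infinity> then \<infinity> else ennreal (enn2real x powr s))"

definition Lp_norm :: "'a measure \<Rightarrow> real \<Rightarrow> ('a \<Rightarrow> ennreal) \<Rightarrow> ennreal" where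
  "Lp_norm M p f = enn_powr (\<integral>\<^sup>+ x. enn_powr (f x) p \<partial>M) (1 / p)"

definition frac_max :: "(real^'n) set \<Rightarrow> (real^'n \<Rightarrow> real) \<Rightarrow> ((real^'n) set \<Rightarrow> real^'n \<Rightarrow> real)
    \<Rightarrow> real \<Rightarrow> real^'n \<Rightarrow> ennreal" where
  "frac_max R \<kappa> h \<gamma> x = (SUP Q\<in>{Q. is_cube Q \<and> x \<in> Q}.
      ennreal (1 / (measure (dunkl_measure R \<kappa>) Q powr (1 + \<gamma> / hom_dim R \<kappa>)))
      * (\<integral>\<^sup>+ y\<in>Q. ennreal \<bar>h Q y\<bar> \<partial>(dunkl_measure R \<kappa>)))"

end

theory Submission
  imports Defs
begin

text \<open>
  The estimate holds with \<open>C = 1\<close> because of a pointwise bound. Put \<open>s = 1/p - 1/q\<close> and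
  \<open>B = \<integral> h_\<alpha>^p d\<omega>\<close>, and let \<open>t\<close> be the \<open>\<alpha>\<close>-average of \<open>h^Q\<close> over a cube \<open>Q\<close> containing \<open>x\<close>.
  Since \<open>t \<le> h_\<alpha>\<close> on \<open>Q\<close>, Chebyshev gives \<open>\<omega>(Q) t^p \<le> B\<close>, hence
  \<open>\<omega>(Q)^s t \<le> B^s t^(p/q)\<close>. The \<open>\<beta>\<close>-average is \<open>\<omega>(Q)^s t\<close>, so \<open>h_\<beta> \<le> B^s h_\<alpha>^(p/q)\<close>;
  raising this to the power \<open>q\<close> and integrating gives \<open>\<integral> h_\<beta>^q d\<omega> \<le> B^(s q + 1) = B^(q/p)\<close>.
\<close>

lemma nn_integral_cmult_ge:
  "c * integral\<^sup>N M f \<le> (\<integral>\<^sup>+x. c * f x \<partial>M)"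
  unfolding nn_integral_def SUP_mult_left_ennreal
proof (rule SUP_least)
  fix g assume g: "g \<in> {g. simple_function M g \<and> g \<le> f}"
  then have "simple_function M (\<lambda>x. c * g x)" "(\<lambda>x. c * g x) \<le> (\<lambda>x. c * f x)"
    by (auto simp: le_fun_def intro: mult_left_mono)
  then have "integral\<^sup>S M (\<lambda>x. c * g x)
      \<le> (SUP g\<in>{g. simple_function M g \<and> g \<le> (\<lambda>x. c * f x)}. integral\<^sup>S M g)"
    by (intro SUP_upper) auto
  then show "c * integral\<^sup>S M g
      \<le> (SUP g\<in>{g. simple_function M g \<and> g \<le> (\<lambda>x. c * f x)}. integral\<^sup>S M g)"
    using g by simp
qed

text \<open>Unlike \<open>nn_integral_cmult\<close>, no measurability is needed: the maximal functions
  below are not known to be measurable.\<close>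
lemma nn_integral_cmult_ennreal:
  assumes "0 \<le> c"
  shows "(\<integral>\<^sup>+x. ennreal c * f x \<partial>M) = ennreal c * integral\<^sup>N M f"
proof (cases "c = 0")
  case False
  then have c: "0 < c" using assms by simp
  have "ennreal (1/c) * (\<integral>\<^sup>+x. ennreal c * f x \<partial>M) \<le> (\<integral>\<^sup>+x. ennreal (1/c) * (ennreal c * f x) \<partial>M)"
    by (rule nn_integral_cmult_ge)
  also have "\<dots> = integral\<^sup>N M f"
    using c by (simp add: mult.assoc[symmetric] ennreal_mult[symmetric])
  finally have "ennreal c * (ennreal (1/c) * (\<integral>\<^sup>+x. ennreal c * f x \<partial>M)) \<le> ennreal c * integral\<^sup>N M f"
    by (rule mult_left_mono) simp
  then have "(\<integral>\<^sup>+x. ennreal c * f x \<partial>M) \<le> ennreal c * integral\<^sup>N M f"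
    using c by (simp add: mult.assoc[symmetric] ennreal_mult[symmetric])
  then show ?thesis
    using nn_integral_cmult_ge[of "ennreal c" M f] by (rule antisym)
qed simp

lemma enn_powr_ennreal: "0 \<le> r \<Longrightarrow> enn_powr (ennreal r) s = ennreal (r powr s)"
  by (simp add: enn_powr_def)

lemma enn_powr_mono:
  assumes "x \<le> y" "0 \<le> s"
  shows "enn_powr x s \<le> enn_powr y s"
proof (cases "y = \<infinity>")
  case False
  then have "x \<noteq> \<infinity>" using assms(1) top_unique by auto
  then show ?thesis using False assms
    by (auto simp: enn_powr_def top.not_eq_extremum intro!: powr_mono2 enn2real_mono)
qed (simp add: enn_powr_def)

lemma enn_powr_cmult_enn_powr:
  assumes "0 \<le> c" "0 < q"
  shows "enn_powr (ennreal c * enn_powr x r) q = ennreal (c powr q) * enn_powr x (r * q)"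
proof (cases "x = \<infinity>")
  case True
  then show ?thesis
    using assms by (cases "c = 0") (simp_all add: enn_powr_def ennreal_mult_top)
next
  case False
  then obtain y where "0 \<le> y" "x = ennreal y" by (cases x) auto
  then show ?thesis
    using assms by (simp add: enn_powr_ennreal ennreal_mult[symmetric] powr_mult powr_powr)
qed

lemma enn_powr_mult_emeasure_le_nn_integral:
  assumes "A \<in> sets M" "\<And>y. y \<in> A \<Longrightarrow> t \<le> H y" "0 \<le> p"
  shows "enn_powr t p * emeasure M A \<le> (\<integral>\<^sup>+y. enn_powr (H y) p \<partial>M)"
proof -
  have "enn_powr t p * emeasure M A = (\<integral>\<^sup>+y. enn_powr t p * indicator A y \<partial>M)"
    using assms(1) by (simp add: nn_integral_cmult_indicator)
  also have "\<dots> \<le> (\<integral>\<^sup>+y. enn_powr (H y) p \<partial>M)"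
    using assms(2,3) by (intro nn_integral_mono) (auto split: split_indicator intro: enn_powr_mono)
  finally show ?thesis .
qed

lemma powr_interpolation_le:
  fixes m \<tau> \<beta> p q :: real
  assumes "0 < m" "0 \<le> \<tau>" "1 < p" "p < q" and bound: "m * \<tau> powr p \<le> \<beta>"
  shows "m powr (1/p - 1/q) * \<tau> \<le> \<beta> powr (1/p - 1/q) * \<tau> powr (p/q)"
proof (cases "\<tau> = 0")
  case False
  with assms have \<tau>: "0 < \<tau>" by simp
  have "m powr (1/p) * \<tau> = (m * \<tau> powr p) powr (1/p)"
    using assms \<tau> by (simp add: powr_mult powr_powr)
  also have "\<dots> \<le> \<beta> powr (1/p)"
    using assms \<tau> by (intro powr_mono2) auto
  finally have "(m powr (1/p) * \<tau>) powr (1 - p/q) \<le> (\<beta> powr (1/p)) powr (1 - p/q)"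
    using assms \<tau> by (intro powr_mono2) auto
  moreover have "1/p * (1 - p/q) = 1/p - 1/q"
    using assms by (simp add: field_simps)
  ultimately have "m powr (1/p - 1/q) * \<tau> powr (1 - p/q) \<le> \<beta> powr (1/p - 1/q)"
    using assms \<tau> by (simp add: powr_mult powr_powr)
  then have "m powr (1/p - 1/q) * \<tau> powr (1 - p/q) * \<tau> powr (p/q) \<le> \<beta> powr (1/p - 1/q) * \<tau> powr (p/q)"
    by (rule mult_right_mono) simp
  then show ?thesis
    using \<tau> by (simp add: mult.assoc powr_add[symmetric])
qed simp

lemma measure_powr_mult_lower_bound_le:
  assumes A: "A \<in> sets M" and lower: "\<And>y. y \<in> A \<Longrightarrow> t \<le> H y"
    and pq: "1 < p" "p < q"
    and \<beta>: "(\<integral>\<^sup>+y. enn_powr (H y) p \<partial>M) = ennreal \<beta>" "0 \<le> \<beta>"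
  shows "ennreal (measure M A powr (1/p - 1/q)) * t \<le> ennreal (\<beta> powr (1/p - 1/q)) * enn_powr t (p/q)"
proof (cases "measure M A = 0")
  case False
  define m where "m = measure M A"
  have m: "0 < m" using False measure_nonneg[of M A] unfolding m_def by linarith
  then have "emeasure M A = ennreal m"
    unfolding m_def by (metis emeasure_eq_ennreal_measure measure_zero_top less_irrefl)
  then have tm: "enn_powr t p * ennreal m \<le> ennreal \<beta>"
    using enn_powr_mult_emeasure_le_nn_integral[of A M t H p] A lower pq \<beta> by simp
  have "t \<noteq> \<infinity>"
    using tm m by (auto simp: enn_powr_def ennreal_mult_top top_unique)
  then obtain \<tau> where \<tau>: "0 \<le> \<tau>" "t = ennreal \<tau>" by (cases t) auto
  have "m * \<tau> powr p \<le> \<beta>"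
    using tm \<tau> m \<beta>(2) by (simp add: enn_powr_ennreal ennreal_mult[symmetric] mult.commute)
  then have "m powr (1/p - 1/q) * \<tau> \<le> \<beta> powr (1/p - 1/q) * \<tau> powr (p/q)"
    using powr_interpolation_le[OF m \<tau>(1) pq] by simp
  then show ?thesis
    using \<tau> unfolding m_def by (simp add: enn_powr_ennreal ennreal_mult[symmetric])
qed simp

lemma Lp_norm_le_of_pointwise_interpolation:
  assumes pq: "1 < p" "p < q"
    and \<beta>: "(\<integral>\<^sup>+x. enn_powr (H x) p \<partial>M) = ennreal \<beta>" "0 \<le> \<beta>"
    and pointwise: "\<And>x. G x \<le> ennreal (\<beta> powr (1/p - 1/q)) * enn_powr (H x) (p/q)"
  shows "Lp_norm M q G \<le> Lp_norm M p H"
proof -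
  define c where "c = \<beta> powr (1/p - 1/q)"
  have Gq: "enn_powr (G x) q \<le> ennreal (c powr q) * enn_powr (H x) p" for x
  proof -
    have "enn_powr (G x) q \<le> enn_powr (ennreal c * enn_powr (H x) (p/q)) q"
      using pointwise pq unfolding c_def by (intro enn_powr_mono) auto
    also have "\<dots> = ennreal (c powr q) * enn_powr (H x) p"
      using pq by (simp add: enn_powr_cmult_enn_powr c_def)
    finally show ?thesis .
  qed
  have c\<beta>: "c powr q * \<beta> = \<beta> powr (q/p)"
  proof (cases "\<beta> = 0")
    case False
    have "c powr q * \<beta> = \<beta> powr ((1/p - 1/q) * q + 1)"
      using False \<beta>(2) unfolding c_def by (simp add: powr_powr powr_add)
    also have "(1/p - 1/q) * q + 1 = q/p"
      using pq by (simp add: field_simps)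
    finally show ?thesis .
  qed (simp add: c_def)
  have "(\<integral>\<^sup>+x. enn_powr (G x) q \<partial>M) \<le> (\<integral>\<^sup>+x. ennreal (c powr q) * enn_powr (H x) p \<partial>M)"
    by (intro nn_integral_mono Gq)
  also have "\<dots> = ennreal (\<beta> powr (q/p))"
    using \<beta> c\<beta>
    by (simp add: nn_integral_cmult_ennreal ennreal_mult[symmetric])
  finally have "(\<integral>\<^sup>+x. enn_powr (G x) q \<partial>M) \<le> ennreal (\<beta> powr (q/p))" .
  then have "Lp_norm M q G \<le> enn_powr (ennreal (\<beta> powr (q/p))) (1/q)"
    unfolding Lp_norm_def using pq by (intro enn_powr_mono) auto
  also have "\<dots> = Lp_norm M p H"
    using pq \<beta> by (simp add: Lp_norm_def enn_powr_ennreal powr_powr)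
  finally show ?thesis .
qed

definition cube_average ::
    "(real^'n) set \<Rightarrow> (real^'n \<Rightarrow> real) \<Rightarrow> ((real^'n) set \<Rightarrow> real^'n \<Rightarrow> real)
      \<Rightarrow> real \<Rightarrow> (real^'n) set \<Rightarrow> ennreal" where
  "cube_average R \<kappa> h \<gamma> Q =
     ennreal (1 / (measure (dunkl_measure R \<kappa>) Q powr (1 + \<gamma> / hom_dim R \<kappa>)))
     * (\<integral>\<^sup>+ y\<in>Q. ennreal \<bar>h Q y\<bar> \<partial>(dunkl_measure R \<kappa>))"

lemma frac_max_eq_SUP_cube_average:
  "frac_max R \<kappa> h \<gamma> x = (SUP Q\<in>{Q. is_cube Q \<and> x \<in> Q}. cube_average R \<kappa> h \<gamma> Q)"
  by (simp add: frac_max_def cube_average_def)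

lemma cube_average_le_frac_max: "is_cube Q \<Longrightarrow> x \<in> Q \<Longrightarrow> cube_average R \<kappa> h \<gamma> Q \<le> frac_max R \<kappa> h \<gamma> x"
  unfolding frac_max_eq_SUP_cube_average by (rule SUP_upper) simp

text \<open>No side condition is needed: for an \<open>\<omega>\<close>-null cube both averages are \<open>0\<close>, as \<open>1 / 0 = 0\<close>.\<close>
lemma cube_average_change_exponent:
  "cube_average R \<kappa> h b Q =
     ennreal (measure (dunkl_measure R \<kappa>) Q powr ((a - b) / hom_dim R \<kappa>)) * cube_average R \<kappa> h a Q"
proof -
  define m where "m = measure (dunkl_measure R \<kappa>) Q"
  have "1 / m powr (1 + b / hom_dim R \<kappa>) = m powr ((a - b) / hom_dim R \<kappa>) * (1 / m powr (1 + a / hom_dim R \<kappa>))"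
  proof (cases "m = 0")
    case False
    have "1 + a / hom_dim R \<kappa> = (a - b) / hom_dim R \<kappa> + (1 + b / hom_dim R \<kappa>)"
      by (simp add: diff_divide_distrib)
    then show ?thesis
      using False by (simp add: powr_add)
  qed simp
  then show ?thesis
    unfolding cube_average_def m_def[symmetric]
    by (simp add: mult.assoc[symmetric] ennreal_mult[symmetric])
qed

lemma is_cube_open: "is_cube (Q::(real^'n) set) \<Longrightarrow> open Q"
proof -
  assume "is_cube Q"
  then obtain c r where "Q = (\<Inter>i. {x. \<bar>x $ i - c $ i\<bar> < r})"
    unfolding is_cube_def by auto
  then show "open Q"
    by (simp add: open_INT open_Collect_less continuous_intros)
qed

lemma sets_dunkl_measure_cube: "is_cube Q \<Longrightarrow> Q \<in> sets (dunkl_measure R \<kappa>)"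
  by (simp add: dunkl_measure_def is_cube_open)

lemma frac_max_le_interpolation:
  assumes pq: "1 < p" "p < q" and exponents: "1/p - 1/q = (a - b) / hom_dim R \<kappa>"
    and \<beta>: "(\<integral>\<^sup>+x. enn_powr (frac_max R \<kappa> h a x) p \<partial>dunkl_measure R \<kappa>) = ennreal \<beta>" "0 \<le> \<beta>"
  shows "frac_max R \<kappa> h b x \<le> ennreal (\<beta> powr (1/p - 1/q)) * enn_powr (frac_max R \<kappa> h a x) (p/q)"
  unfolding frac_max_eq_SUP_cube_average[of R \<kappa> h b]
proof (rule SUP_least, clarify)
  fix Q assume Q: "is_cube Q" "x \<in> Q"
  have "cube_average R \<kappa> h b Q
      \<le> ennreal (\<beta> powr (1/p - 1/q)) * enn_powr (cube_average R \<kappa> h a Q) (p/q)"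
    unfolding cube_average_change_exponent[of R \<kappa> h b Q a] exponents[symmetric]
    using sets_dunkl_measure_cube[OF Q(1)] cube_average_le_frac_max[OF Q(1)] pq \<beta>
    by (intro measure_powr_mult_lower_bound_le)
  also have "\<dots> \<le> ennreal (\<beta> powr (1/p - 1/q)) * enn_powr (frac_max R \<kappa> h a x) (p/q)"
    using cube_average_le_frac_max[OF Q] pq by (intro mult_left_mono enn_powr_mono) auto
  finally show "cube_average R \<kappa> h b Q \<le> ennreal (\<beta> powr (1/p - 1/q)) * enn_powr (frac_max R \<kappa> h a x) (p/q)" .
qed

theorem lemma4p7:
  fixes R :: "(real^'n) set" and \<kappa> :: "real^'n \<Rightarrow> real"
    and a b p q :: real
  assumes "root_system R" and "multiplicity R \<kappa>"
    and "0 \<le> b" and "b < a"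
    and "1 < p" and "p < q"
    and "1 / p - 1 / q = (a - b) / hom_dim R \<kappa>"
  shows "\<exists>C::real. C > 0 \<and>
     (\<forall>h :: (real^'n) set \<Rightarrow> real^'n \<Rightarrow> real.
        (\<forall>Q. is_cube Q \<longrightarrow> h Q \<in> borel_measurable lborel) \<longrightarrow>
        Lp_norm (dunkl_measure R \<kappa>) q (frac_max R \<kappa> h b)
          \<le> ennreal C * Lp_norm (dunkl_measure R \<kappa>) p (frac_max R \<kappa> h a))"
proof (intro exI[of _ 1] conjI allI impI)
  fix h :: "(real^'n) set \<Rightarrow> real^'n \<Rightarrow> real"
  define B where "B = (\<integral>\<^sup>+x. enn_powr (frac_max R \<kappa> h a x) p \<partial>dunkl_measure R \<kappa>)"
  show "Lp_norm (dunkl_measure R \<kappa>) q (frac_max R \<kappa> h b)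
      \<le> ennreal 1 * Lp_norm (dunkl_measure R \<kappa>) p (frac_max R \<kappa> h a)"
  proof (cases B)
    case (real \<beta>)
    then have "frac_max R \<kappa> h b x
        \<le> ennreal (\<beta> powr (1/p - 1/q)) * enn_powr (frac_max R \<kappa> h a x) (p/q)" for x
      using assms(5-7) unfolding B_def by (intro frac_max_le_interpolation)
    then show ?thesis
      using real assms(5,6) unfolding B_def by (simp add: Lp_norm_le_of_pointwise_interpolation)
  qed (simp add: B_def Lp_norm_def enn_powr_def)
qed simp

end
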